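(* Let $z$ be a positive integer and let $C$ be a quasi-cyclic LDPC code with circulant matrices of size $z$ whose base matrix is the $8\times 24$ matrix $H_{b(2/3B)}$ below. Then there is no quasi-cyclic LDPC code $D$ with circulant matrices of size $z$ such that (i) the parity-check matrices $H_C$ and $H_D$ have the same row-weight distribution, (ii) every column of $H_D$ has Hamming weight at least $2$, and (iii) $D^{\perp}\subset C$. The rows of $H_{b(2/3B)}$ are: 101010101010101011000000, 010101010101010101100000, 101010101010101000110000, 010101010101010100011000, 101010101010101000001100, 010101010101010100000110, 101010101010101010000011, 010101010101010110000001.
   Context: All codes are binary linear codes over $\mathbb{F}_2$; $D^{\perp}=\{d' : d\,d'^T=0\ \forall d\in D\}$. For a positive integer $z$, $I_z(1)$ is the $z\times z$ circulant permutation matrix of one circular right shift and $I_z(b)=I_z(1)^b$. A quasi-cyclic LDPC code with circulant matrices of size $z$ is given by a $J\times L$ model matrix with entries in $\{0,\dots,z-1\}\cup\{\infty\}$; its parity-check matrix $H$ is obtained by replacing each finite entry $p$ by $I_z(p)$ and each $\infty$ by the $z\times z$ zero matrix, and the code is $\{x\in\mathbb{F}_2^{zL}:Hx^T=0\}$. Its base matrix is the binary $J\times L$ matrix with $1$ exactly where the model entry is finite. The row-weight distribution of a binary matrix is the multiset of Hamming weights of its rows (for each $w$, the number of rows of weight $w$). The matrix $H_{b(2/3B)}$ is the base matrix of the rate-$2/3$B LDPC codes of the IEEE802.16e standard. *)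

theory Defs
  imports Main "HOL-Library.Z2" "HOL-Library.Multiset"
begin

(* Vectors / matrices over F_2 = bit.  A vector of length n is a function nat => bit
   that vanishes outside {0..<n}; a matrix is a function nat => nat => bit together
   with explicit dimensions. *)

definition vec_space :: "nat \<Rightarrow> (nat \<Rightarrow> bit) set" where
  "vec_space n = {x. \<forall>k\<ge>n. x k = 0}"

(* circulant permutation matrix I_z(b) = I_z(1)^b, I_z(1) = one circular right shift:
   entry (i,j) is 1 iff j = (i + b) mod z *)
definition circ :: "nat \<Rightarrow> nat \<Rightarrow> nat \<Rightarrow> nat \<Rightarrow> bit" where
  "circ z b i j = (if j = (i + b) mod z then 1 else 0)"

(* a J x L model matrix: None = infinity, Some p with p < z *)
definition model_matrix :: "nat \<Rightarrow> nat \<Rightarrow> nat \<Rightarrow> (nat \<Rightarrow> nat \<Rightarrow> nat option) \<Rightarrow> bool" where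
  "model_matrix J L z M \<longleftrightarrow> (\<forall>a<J. \<forall>c<L. \<forall>p. M a c = Some p \<longrightarrow> p < z)"

definition pcm :: "nat \<Rightarrow> (nat \<Rightarrow> nat \<Rightarrow> nat option) \<Rightarrow> nat \<Rightarrow> nat \<Rightarrow> bit" where
  "pcm z M r s = (case M (r div z) (s div z) of
                    None \<Rightarrow> 0
                  | Some p \<Rightarrow> circ z p (r mod z) (s mod z))"

definition qc_code :: "nat \<Rightarrow> nat \<Rightarrow> nat \<Rightarrow> (nat \<Rightarrow> nat \<Rightarrow> nat option) \<Rightarrow> (nat \<Rightarrow> bit) set" where
  "qc_code J L z M = {x \<in> vec_space (z * L).
      \<forall>r<J * z. (\<Sum>s<L * z. pcm z M r s * x s) = 0}"

definition dual_code :: "nat \<Rightarrow> (nat \<Rightarrow> bit) set \<Rightarrow> (nat \<Rightarrow> bit) set" where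
  "dual_code n D = {d' \<in> vec_space n. \<forall>d\<in>D. (\<Sum>k<n. d k * d' k) = 0}"

definition base_matrix :: "(nat \<Rightarrow> nat \<Rightarrow> nat option) \<Rightarrow> nat \<Rightarrow> nat \<Rightarrow> bool" where
  "base_matrix M a c \<longleftrightarrow> M a c \<noteq> None"

definition row_weight_distr :: "nat \<Rightarrow> nat \<Rightarrow> (nat \<Rightarrow> nat \<Rightarrow> bit) \<Rightarrow> nat multiset" where
  "row_weight_distr m n H = image_mset (\<lambda>r. card {s. s < n \<and> H r s \<noteq> 0}) (mset_set {..<m})"

definition col_weight :: "nat \<Rightarrow> (nat \<Rightarrow> nat \<Rightarrow> bit) \<Rightarrow> nat \<Rightarrow> nat" where
  "col_weight m H s = card {r. r < m \<and> H r s \<noteq> 0}"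

(* H_{b(2/3B)} of IEEE 802.16e *)
definition Hb_rows :: "string list" where
  "Hb_rows = [
    ''101010101010101011000000'',
    ''010101010101010101100000'',
    ''101010101010101000110000'',
    ''010101010101010100011000'',
    ''101010101010101000001100'',
    ''010101010101010100000110'',
    ''101010101010101010000011'',
    ''010101010101010110000001'']"

definition Hb23B :: "nat \<Rightarrow> nat \<Rightarrow> bool" where
  "Hb23B a c \<longleftrightarrow> (Hb_rows ! a) ! c = CHR ''1''"

end

theory Submission imports Defs "HOL-Number_Theory.Cong" begin

text \<open>Fold vectors of length \<open>L z\<close> block-wise over \<open>\<bbbF>\<^sub>2\<close>. Every row and every column of a
  circulant has weight one, so a row of \<open>H_D\<close> folds to the corresponding row of the base matrix
  of \<open>D\<close>, and the \<open>z\<close> parity checks of a block row of \<open>H_C\<close> add up to a check by the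
  corresponding base row of \<open>C\<close> on the folded vector. Rows of \<open>H_D\<close> lie in \<open>D\<^sup>\<perp> \<subseteq> C\<close>, so the
  base matrices of \<open>D\<close> and \<open>C\<close> are row-wise orthogonal. The rows of \<open>H_b(2/3B)\<close> sum to the
  unit vector at column 16, hence column 16 of the base matrix of \<open>D\<close> is empty and the
  corresponding columns of \<open>H_D\<close> have weight 0.\<close>

definition block_fold :: "nat \<Rightarrow> (nat \<Rightarrow> bit) \<Rightarrow> nat \<Rightarrow> bit" where
  "block_fold z x c = (\<Sum>k<z. x (c * z + k))"

lemma sum_lessThan_mult_blocks:
  fixes g :: "nat \<Rightarrow> 'a::comm_monoid_add"
  shows "(\<Sum>s<n * k. g s) = (\<Sum>m<n. \<Sum>i<k. g (m * k + i))"
proof -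
  have "(\<Sum>s<n * k. g s) = (\<Sum>m<n. sum g {m * k..<m * k + k})"
    by (rule sum.nat_group[symmetric])
  also have "\<dots> = (\<Sum>m<n. \<Sum>i<k. g (m * k + i))"
  proof (rule sum.cong[OF refl])
    fix m
    have "sum g {0 + m * k..<k + m * k} = (\<Sum>i\<in>{0..<k}. g (i + m * k))"
      by (rule sum.shift_bounds_nat_ivl)
    then show "sum g {m * k..<m * k + k} = (\<Sum>i<k. g (m * k + i))"
      by (simp add: atLeast0LessThan add.commute)
  qed
  finally show ?thesis .
qed

lemma circ_row_sum: "i < z \<Longrightarrow> (\<Sum>k<z. circ z p i k) = 1"
  unfolding circ_def by (simp add: sum.delta)

lemma circ_col_sum:
  assumes "k < z"
  shows "(\<Sum>j<z. circ z p j k) = 1"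
proof -
  let ?f = "\<lambda>j. (j + p) mod z"
  have inj: "inj_on ?f {..<z}"
  proof
    fix x y assume "x \<in> {..<z}" "y \<in> {..<z}" "?f x = ?f y"
    then show "x = y"
      using cong_add_rcancel_nat[of x p y z] by (simp add: cong_def)
  qed
  have "?f ` {..<z} \<subseteq> {..<z}" using assms by auto
  then have img: "?f ` {..<z} = {..<z}"
    by (simp add: card_subset_eq card_image[OF inj])
  have "(\<Sum>j<z. circ z p j k) = (\<Sum>t\<in>?f ` {..<z}. if k = t then 1 else 0)"
    unfolding circ_def sum.reindex[OF inj] by simp
  also have "\<dots> = 1" using img assms by (simp add: sum.delta)
  finally show ?thesis .
qed

lemma mult_add_div_mod_nat:
  assumes "j < (z::nat)"
  shows "(b * z + j) div z = b" and "(b * z + j) mod z = j"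
  using assms by auto

lemma block_fold_pcm_row:
  assumes "z > 0"
  shows "block_fold z (pcm z M r) c = of_bool (base_matrix M (r div z) c)"
proof -
  have "block_fold z (pcm z M r) c
      = (\<Sum>k<z. case M (r div z) c of None \<Rightarrow> 0 | Some p \<Rightarrow> circ z p (r mod z) k)"
    unfolding block_fold_def pcm_def
    by (intro sum.cong) (auto simp: mult_add_div_mod_nat split: option.split)
  also have "\<dots> = of_bool (base_matrix M (r div z) c)"
    using assms by (cases "M (r div z) c") (auto simp: base_matrix_def circ_row_sum)
  finally show ?thesis .
qed

lemma sum_pcm_block_rows:
  assumes "z > 0"
  shows "(\<Sum>j<z. pcm z M (b * z + j) s) = of_bool (base_matrix M b (s div z))"
proof -
  have "(\<Sum>j<z. pcm z M (b * z + j) s)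
      = (\<Sum>j<z. case M b (s div z) of None \<Rightarrow> 0 | Some p \<Rightarrow> circ z p j (s mod z))"
    unfolding pcm_def by (intro sum.cong) (auto simp: mult_add_div_mod_nat split: option.split)
  also have "\<dots> = of_bool (base_matrix M b (s div z))"
    using assms by (cases "M b (s div z)") (auto simp: base_matrix_def circ_col_sum)
  finally show ?thesis .
qed

lemma qc_code_block_fold_orthogonal:
  assumes "z > 0" and x: "x \<in> qc_code J L z M" and "b < J"
  shows "(\<Sum>c<L. of_bool (base_matrix M b c) * block_fold z x c) = 0"
proof -
  have row_checks: "(\<Sum>s<L * z. pcm z M (b * z + j) s * x s) = 0" if "j < z" for j
  proof -
    have "b * z + j < (b + 1) * z" using that by simp
    also have "\<dots> \<le> J * z" using \<open>b < J\<close> by (intro mult_right_mono) auto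
    finally show ?thesis using x unfolding qc_code_def by simp
  qed
  have "0 = (\<Sum>j<z. \<Sum>s<L * z. pcm z M (b * z + j) s * x s)"
    using row_checks by simp
  also have "\<dots> = (\<Sum>s<L * z. (\<Sum>j<z. pcm z M (b * z + j) s) * x s)"
    by (simp only: sum_distrib_right) (rule sum.swap)
  also have "\<dots> = (\<Sum>c<L. \<Sum>k<z. (\<Sum>j<z. pcm z M (b * z + j) (c * z + k)) * x (c * z + k))"
    by (rule sum_lessThan_mult_blocks)
  also have "\<dots> = (\<Sum>c<L. \<Sum>k<z. of_bool (base_matrix M b c) * x (c * z + k))"
    using assms(1) by (intro sum.cong refl) (simp add: sum_pcm_block_rows mult_add_div_mod_nat)
  also have "\<dots> = (\<Sum>c<L. of_bool (base_matrix M b c) * block_fold z x c)"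
    by (simp only: block_fold_def sum_distrib_left)
  finally show ?thesis by simp
qed

lemma pcm_row_in_dual_code:
  assumes "r < J * z"
  shows "(\<lambda>s. if s < L * z then pcm z M r s else 0) \<in> dual_code (L * z) (qc_code J L z M)"
proof -
  have "(\<Sum>k<L * z. d k * (if k < L * z then pcm z M r k else 0)) = 0"
    if "d \<in> qc_code J L z M" for d
  proof -
    have "(\<Sum>k<L * z. d k * (if k < L * z then pcm z M r k else 0))
        = (\<Sum>s<L * z. pcm z M r s * d s)"
      by (intro sum.cong refl) (simp add: mult.commute)
    also have "\<dots> = 0" using that assms unfolding qc_code_def by blast
    finally show ?thesis .
  qed
  moreover have "(if k < L * z then pcm z M r k else 0) = 0" if "k \<ge> L * z" for k
    using that by simp
  ultimately show ?thesis unfolding dual_code_def vec_space_def by blast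
qed

lemma dual_subset_base_orthogonal:
  assumes "z > 0" and sub: "dual_code (L * z) (qc_code J L z MD) \<subseteq> qc_code K L z MC"
    and "a < J" and "b < K"
  shows "(\<Sum>c<L. of_bool (base_matrix MC b c) * of_bool (base_matrix MD a c)) = (0::bit)"
proof -
  define h where "h s = (if s < L * z then pcm z MD (a * z) s else 0)" for s
  have "a * z < J * z" using assms by simp
  then have "h \<in> qc_code K L z MC"
    using pcm_row_in_dual_code sub unfolding h_def by blast
  then have "(\<Sum>c<L. of_bool (base_matrix MC b c) * block_fold z h c) = 0"
    using qc_code_block_fold_orthogonal assms by blast
  moreover have "block_fold z h c = of_bool (base_matrix MD a c)" if "c < L" for c
  proof -
    have "c * z + k < L * z" if "k < z" for k
    proof -
      have "c * z + k < (c + 1) * z" using that by simp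
      also have "\<dots> \<le> L * z" using \<open>c < L\<close> by (intro mult_right_mono) auto
      finally show ?thesis .
    qed
    then have "block_fold z h c = block_fold z (pcm z MD (a * z)) c"
      by (auto simp: block_fold_def h_def intro: sum.cong)
    then show ?thesis using assms(1) by (simp add: block_fold_pcm_row)
  qed
  ultimately show ?thesis by simp
qed

lemma Hb23B_column_parity:
  "c < 24 \<Longrightarrow> (\<Sum>b<8. of_bool (Hb23B b c)) = (of_bool (c = 16) :: bit)"
  unfolding Hb23B_def Hb_rows_def
  by (simp add: lessThan_nat_numeral less_Suc_eq numeral_eq_Suc) (elim disjE; simp)

lemma col_weight_pcm_empty_block_column:
  assumes "z > 0" and "\<forall>a<J. \<not> base_matrix M a c"
  shows "col_weight (J * z) (pcm z M) (c * z) = 0"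
proof -
  have "pcm z M r (c * z) = 0" if "r < J * z" for r
  proof -
    have "r div z < J" using that assms(1) by (simp add: div_less_iff_less_mult)
    then show ?thesis using assms by (simp add: pcm_def base_matrix_def)
  qed
  then show ?thesis by (auto simp: col_weight_def)
qed

theorem mainTheorem3:
  fixes z :: nat and MC :: "nat \<Rightarrow> nat \<Rightarrow> nat option"
  assumes "z > 0"
    and "model_matrix 8 24 z MC"
    and "\<forall>a<8. \<forall>c<24. base_matrix MC a c = Hb23B a c"
  shows "\<not> (\<exists>J MD. model_matrix J 24 z MD
              \<and> row_weight_distr (J * z) (24 * z) (pcm z MD)
                  = row_weight_distr (8 * z) (24 * z) (pcm z MC)
              \<and> (\<forall>s<24 * z. col_weight (J * z) (pcm z MD) s \<ge> 2)
              \<and> dual_code (24 * z) (qc_code J 24 z MD) \<subseteq> qc_code 8 24 z MC)"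
proof
  assume "\<exists>J MD. model_matrix J 24 z MD
              \<and> row_weight_distr (J * z) (24 * z) (pcm z MD)
                  = row_weight_distr (8 * z) (24 * z) (pcm z MC)
              \<and> (\<forall>s<24 * z. col_weight (J * z) (pcm z MD) s \<ge> 2)
              \<and> dual_code (24 * z) (qc_code J 24 z MD) \<subseteq> qc_code 8 24 z MC"
  then obtain J MD where weights: "\<forall>s<24 * z. col_weight (J * z) (pcm z MD) s \<ge> 2"
    and sub: "dual_code (24 * z) (qc_code J 24 z MD) \<subseteq> qc_code 8 24 z MC" by blast
  have "\<not> base_matrix MD a 16" if "a < J" for a
  proof -
    have "0 = (\<Sum>b<8. \<Sum>c<24. of_bool (Hb23B b c) * of_bool (base_matrix MD a c) :: bit)"
      using dual_subset_base_orthogonal[OF assms(1) sub that] assms(3) by simp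
    also have "\<dots> = (\<Sum>c<24. (\<Sum>b<8. of_bool (Hb23B b c)) * of_bool (base_matrix MD a c))"
      by (simp only: sum_distrib_right) (rule sum.swap)
    also have "\<dots> = (\<Sum>c<24. of_bool (c = 16) * of_bool (base_matrix MD a c))"
      by (intro sum.cong refl) (simp only: lessThan_iff Hb23B_column_parity)
    also have "\<dots> = (\<Sum>c<24. if c = 16 then of_bool (base_matrix MD a c) else 0)"
      by (intro sum.cong refl) simp
    also have "\<dots> = of_bool (base_matrix MD a 16)"
      by (simp only: sum.delta finite_lessThan) simp
    finally show ?thesis by simp
  qed
  then have "col_weight (J * z) (pcm z MD) (16 * z) = 0"
    using col_weight_pcm_empty_block_column assms(1) by blast
  moreover have "16 * z < 24 * z" using assms(1) by simp
  ultimately show False using weights by fastforce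
qed

end
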